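(* Let $X \in 2^\omega$ be a 2-generic real. Then $X' \not\leq_{tt} X \oplus 0'$.
   Context: Reals are elements of Cantor space $2^\omega$, identified with subsets of $\omega$. For $X\in 2^\omega$ and $l\in\omega$, $X\upharpoonright l$ is the initial segment of $X$ of length $l$. A real $X$ is $n$-generic if for every $\Sigma^0_n$ set $S$ of finite binary strings, either there is $l$ with $X\upharpoonright l \in S$, or there is $l$ such that no string $\tau \supseteq X\upharpoonright l$ lies in $S$. A Turing functional $\Phi$ is a truth-table reduction if there is a computable $f:\omega\to\omega$ such that for every $n$ and every string $\sigma$ of length $f(n)$, $\Phi^\sigma(n)$ converges; $A \leq_{tt} B$ means $\Phi(B)=A$ for some truth-table reduction $\Phi$. $X' = \{e : \{e\}^X(e)\downarrow\}$ is the Turing jump of $X$, $0'$ is the halting set, and $A\oplus B$ is the join $\{2n : n\in A\}\cup\{2n+1 : n \in B\}$. *)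

theory Defs
  imports "HOL-Library.Nat_Bijection" "HOL-Library.Sublist"
begin

text \<open>An orc is a partial
  0/1-valued function; a real X is the total orc, a finite string sigma is the orc
  defined exactly below its length (queries beyond the length diverge).\<close>

datatype rf =
    RZero | RSucc | RFst | RSnd | ROrc
  | RComp rf rf
  | RPair rf rf
  | RRec rf rf
  | RMu rf

type_synonym orc = "nat \<Rightarrow> bool option"

inductive ev :: "orc \<Rightarrow> rf \<Rightarrow> nat \<Rightarrow> nat \<Rightarrow> bool" for Q where
  evZ: "ev Q RZero x 0"
| evS: "ev Q RSucc x (Suc x)"
| evF: "ev Q RFst x (fst (prod_decode x))"
| evN: "ev Q RSnd x (snd (prod_decode x))"
| evO: "Q x = Some b \<Longrightarrow> ev Q ROrc x (of_bool b)"
| evC: "ev Q g x y \<Longrightarrow> ev Q f y z \<Longrightarrow> ev Q (RComp f g) x z"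
| evP: "ev Q f x y \<Longrightarrow> ev Q g x z \<Longrightarrow> ev Q (RPair f g) x (prod_encode (y, z))"
| evR0: "prod_decode z = (x, 0) \<Longrightarrow> ev Q f x y \<Longrightarrow> ev Q (RRec f g) z y"
| evRS: "prod_decode z = (x, Suc n) \<Longrightarrow> ev Q (RRec f g) (prod_encode (x, n)) r
         \<Longrightarrow> ev Q g (prod_encode (x, prod_encode (n, r))) y \<Longrightarrow> ev Q (RRec f g) z y"
| evM: "ev Q f (prod_encode (x, n)) 0 \<Longrightarrow> (\<forall>m<n. \<exists>k. ev Q f (prod_encode (x, m)) (Suc k))
         \<Longrightarrow> ev Q (RMu f) x n"

primrec code :: "rf \<Rightarrow> nat" where
  "code RZero = 0"
| "code RSucc = 1"
| "code RFst = 2"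
| "code RSnd = 3"
| "code ROrc = 4"
| "code (RComp f g) = 5 + 9 * prod_encode (code f, code g)"
| "code (RPair f g) = 6 + 9 * prod_encode (code f, code g)"
| "code (RRec f g) = 7 + 9 * prod_encode (code f, code g)"
| "code (RMu f) = 8 + 9 * code f"

definition decode :: "nat \<Rightarrow> rf" where
  "decode e = (if e \<in> range code then inv code e else RZero)"

definition phi :: "nat \<Rightarrow> orc \<Rightarrow> nat \<Rightarrow> nat \<Rightarrow> bool" where
  "phi e Q x y = ev Q (decode e) x y"

definition set_orc :: "nat set \<Rightarrow> orc" where
  "set_orc X = (\<lambda>n. Some (n \<in> X))"

definition str_orc :: "bool list \<Rightarrow> orc" where
  "str_orc \<sigma> = (\<lambda>n. if n < length \<sigma> then Some (\<sigma> ! n) else None)"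

definition empty_orc :: orc where
  "empty_orc = (\<lambda>_. None)"

definition computable_fun :: "(nat \<Rightarrow> nat) \<Rightarrow> bool" where
  "computable_fun f \<longleftrightarrow> (\<exists>e. \<forall>n. phi e empty_orc n (f n))"

definition decidable :: "nat set \<Rightarrow> bool" where
  "decidable A \<longleftrightarrow> (\<exists>e. \<forall>n. phi e empty_orc n (if n \<in> A then 1 else 0))"

definition tt_functional :: "nat \<Rightarrow> bool" where
  "tt_functional e \<longleftrightarrow> (\<exists>f. computable_fun f \<and>
      (\<forall>n \<sigma>. length \<sigma> = f n \<longrightarrow> (\<exists>y. phi e (str_orc \<sigma>) n y)))"

definition computes :: "nat \<Rightarrow> nat set \<Rightarrow> nat set \<Rightarrow> bool" where
  "computes e B A \<longleftrightarrow> (\<forall>n. phi e (set_orc B) n (if n \<in> A then 1 else 0))"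

definition tt_le :: "nat set \<Rightarrow> nat set \<Rightarrow> bool" where
  "tt_le A B \<longleftrightarrow> (\<exists>e. tt_functional e \<and> computes e B A)"

definition jump :: "nat set \<Rightarrow> nat set" where
  "jump X = {e. \<exists>y. phi e (set_orc X) e y}"

definition halting :: "nat set" where
  "halting = {e. \<exists>y. phi e empty_orc e y}"

definition join :: "nat set \<Rightarrow> nat set \<Rightarrow> nat set" where
  "join A B = {2 * n | n. n \<in> A} \<union> {2 * n + 1 | n. n \<in> B}"

fun Sigma :: "nat \<Rightarrow> nat set \<Rightarrow> bool" where
  "Sigma 0 A = decidable A"
| "Sigma (Suc n) A = (\<exists>R. Sigma n R \<and> A = {m. \<exists>k. prod_encode (m, k) \<notin> R})"

definition str_code :: "bool list \<Rightarrow> nat" where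
  "str_code \<sigma> = list_encode (map of_bool \<sigma>)"

definition Sigma_strings :: "nat \<Rightarrow> bool list set \<Rightarrow> bool" where
  "Sigma_strings n S \<longleftrightarrow> (\<exists>A. Sigma n A \<and> S = {\<sigma>. str_code \<sigma> \<in> A})"

definition restr :: "nat set \<Rightarrow> nat \<Rightarrow> bool list" where
  "restr X l = map (\<lambda>i. i \<in> X) [0..<l]"

definition generic :: "nat \<Rightarrow> nat set \<Rightarrow> bool" where
  "generic n X \<longleftrightarrow> (\<forall>S. Sigma_strings n S \<longrightarrow>
      (\<exists>l. restr X l \<in> S) \<or> (\<exists>l. \<forall>\<tau>. prefix (restr X l) \<tau> \<longrightarrow> \<tau> \<notin> S))"

end

theory Submission
  imports Defs
begin

text \<open>
  Suppose Phi_e is a truth-table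
  reduction of X' to X join 0' with computable use bound f.  For each c let d_c be the code of a
  program that, on any input x, halts iff f(x) + c is in the oracle; so d_c is in X' iff
  P_c = f(d_c) + c is in X.  Let S be the set of strings sigma for which some c, some guess for the
  halting set below f(d_c), and a certified computation of Phi_e on the resulting oracle string
  give a value at d_c that disagrees with sigma(P_c).  Since convergence of computations is
  certified by finite, mechanically checkable certificates, S is Sigma-2.  If X meets S, the
  certified computation is the true one and contradicts d_c in X' iff P_c in X; if some initial
  segment of X has no extension in S, the total functional on the true oracle string lets us
  build one.  Both contradict 2-genericity.
\<close>

inductive_cases evZE: "ev Q RZero x y"
inductive_cases evSE: "ev Q RSucc x y"
inductive_cases evFE: "ev Q RFst x y"
inductive_cases evNE: "ev Q RSnd x y"
inductive_cases evOE: "ev Q ROrc x y"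
inductive_cases evCE: "ev Q (RComp f g) x y"
inductive_cases evPE: "ev Q (RPair f g) x y"
inductive_cases evRE: "ev Q (RRec f g) x y"
inductive_cases evME: "ev Q (RMu f) x y"

text \<open>A computation only uses the oracle answers it queries, so it survives extending the oracle.\<close>
lemma ev_oracle_mono:
  assumes "ev Q P x y" and "\<And>n b. Q n = Some b \<Longrightarrow> Q' n = Some b"
  shows "ev Q' P x y"
  using assms(1)
proof (induction rule: ev.induct)
  case (evO x b)
  then show ?case using assms(2) by (blast intro: ev.evO)
next
  case (evM f x n)
  then show ?case by (blast intro: ev.evM)
qed (auto intro: ev.intros)

lemma ev_functional:
  assumes "ev Q P x y" and "ev Q P x y'"
  shows "y = y'"
  using assms
proof (induction arbitrary: y' rule: ev.induct)
  case (evO x b) then show ?case by (metis evOE option.inject)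
next
  case (evC g x y f z) from evC.prems show ?case by (rule evCE) (use evC.IH in blast)
next
  case (evP f x y g z) from evP.prems show ?case by (rule evPE) (use evP.IH in blast)
next
  case (evR0 z x f y g)
  from evR0.prems show ?case by (rule evRE) (use evR0.hyps(1) evR0.IH in simp_all)
next
  case (evRS z x n f g r y)
  from evRS.prems show ?case
  proof (rule evRE)
    fix x' n' r'
    assume z: "prod_decode z = (x', Suc n')" and r': "ev Q (RRec f g) (prod_encode (x', n')) r'"
      and y': "ev Q g (prod_encode (x', prod_encode (n', r'))) y'"
    have "x' = x" "n' = n" using evRS.hyps(1) z by auto
    with r' have "r' = r" using evRS.IH(1) by blast
    with y' \<open>x' = x\<close> \<open>n' = n\<close> show ?thesis using evRS.IH(2) by blast
  qed (use evRS.hyps(1) in simp)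
next
  case (evM f x n)
  from evM.prems show ?case
  proof (rule evME)
    assume zero: "ev Q f (prod_encode (x, y')) 0"
      and pos: "\<forall>m<y'. \<exists>k. ev Q f (prod_encode (x, m)) (Suc k)"
    have "\<not> n < y'"
    proof
      assume "n < y'"
      with pos obtain k where "ev Q f (prod_encode (x, n)) (Suc k)" by blast
      with evM.IH(1) show False by fastforce
    qed
    moreover have "\<not> y' < n"
    proof
      assume "y' < n"
      with evM.IH(2) obtain k where "\<And>z. ev Q f (prod_encode (x, y')) z \<Longrightarrow> Suc k = z" by blast
      with zero show False by fastforce
    qed
    ultimately show ?thesis by arith
  qed
qed (blast elim: evZE evSE evFE evNE)+

section \<open>Decoding program numbers\<close>

definition left_sub :: "nat \<Rightarrow> nat" where "left_sub p = fst (prod_decode (p div 9))"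
definition right_sub :: "nat \<Rightarrow> nat" where "right_sub p = snd (prod_decode (p div 9))"

lemma sub_code [simp]:
  assumes "k < 9"
  shows "left_sub (k + 9 * prod_encode (a, b)) = a" and "right_sub (k + 9 * prod_encode (a, b)) = b"
  using assms by (simp_all add: left_sub_def right_sub_def)

lemma sub_less:
  assumes "0 < p"
  shows "left_sub p < p" and "right_sub p < p" and "p div 9 < p"
proof -
  have "fst (prod_decode k) \<le> k" "snd (prod_decode k) \<le> k" for k
    by (metis le_prod_encode_1 le_prod_encode_2 prod.collapse prod_decode_inverse)+
  moreover have "p div 9 < p" using assms by simp
  ultimately show "left_sub p < p" "right_sub p < p" "p div 9 < p"
    unfolding left_sub_def right_sub_def using le_less_trans by blast+
qed

text \<open>An inverse of code defined by recursion on the program number itself (rather than via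
  the choice operator as decode is); the certificate checker inspects program numbers through it.\<close>
function dec :: "nat \<Rightarrow> rf" where
  "dec p = (if p = 0 then RZero else if p = 1 then RSucc else if p = 2 then RFst
     else if p = 3 then RSnd else if p = 4 then ROrc
     else if p mod 9 = 5 then RComp (dec (left_sub p)) (dec (right_sub p))
     else if p mod 9 = 6 then RPair (dec (left_sub p)) (dec (right_sub p))
     else if p mod 9 = 7 then RRec (dec (left_sub p)) (dec (right_sub p))
     else if p mod 9 = 8 then RMu (dec (p div 9)) else RZero)"
  by auto
termination
  by (relation "measure id") (simp_all add: sub_less)

lemma dec_code: "dec (code P) = P"
  by (induction P) simp_all

declare dec.simps [simp del]

lemma inj_code: "inj code"
  by (metis dec_code injI)

lemma decode_code [simp]: "decode (code P) = P"
  by (simp add: decode_def inj_code)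

lemma decode_eq_dec: "p \<in> range code \<Longrightarrow> decode p = dec p"
  by (auto simp: dec_code)

lemma decode_non_code: "p \<notin> range code \<Longrightarrow> decode p = RZero"
  by (simp add: decode_def)

lemma dec_base: "dec 0 = RZero" "dec 1 = RSucc" "dec 2 = RFst" "dec 3 = RSnd" "dec 4 = ROrc"
  by (subst dec.simps; simp)+

lemma dec_step:
  assumes "4 < p"
  shows "p mod 9 < 5 \<Longrightarrow> dec p = RZero"
    and "p mod 9 = 5 \<Longrightarrow> dec p = RComp (dec (left_sub p)) (dec (right_sub p))"
    and "p mod 9 = 6 \<Longrightarrow> dec p = RPair (dec (left_sub p)) (dec (right_sub p))"
    and "p mod 9 = 7 \<Longrightarrow> dec p = RRec (dec (left_sub p)) (dec (right_sub p))"
    and "p mod 9 = 8 \<Longrightarrow> dec p = RMu (dec (p div 9))"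
  using assms by (subst dec.simps; simp)+

section \<open>Computable functions and their closure properties\<close>

text \<open>A function computable with the empty oracle is computed by a program that never queries
  its oracle, hence relative to every oracle.  This uniform form is what we work with.\<close>
lemma computable_fun_iff: "computable_fun h \<longleftrightarrow> (\<exists>P. \<forall>Q x. ev Q P x (h x))"
proof
  assume "computable_fun h"
  then obtain e where e: "\<And>n. ev empty_orc (decode e) n (h n)"
    unfolding computable_fun_def phi_def by blast
  have "ev Q (decode e) x (h x)" for Q x
    by (rule ev_oracle_mono[OF e]) (simp add: empty_orc_def)
  then show "\<exists>P. \<forall>Q x. ev Q P x (h x)" by blast
next
  assume "\<exists>P. \<forall>Q x. ev Q P x (h x)"
  then show "computable_fun h" unfolding computable_fun_def phi_def by (metis decode_code)
qed

lemma decidable_iff: "decidable A \<longleftrightarrow> computable_fun (\<lambda>n. of_bool (n \<in> A))"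
  by (simp add: decidable_def computable_fun_def of_bool_def)

lemma computableI: "(\<And>Q x. ev Q P x (h x)) \<Longrightarrow> computable_fun h"
  unfolding computable_fun_iff by blast

lemma computable_cong: "computable_fun h \<Longrightarrow> (\<And>x. h x = h' x) \<Longrightarrow> computable_fun h'"
  by (metis ext)


text \<open>The basic closure rules are declared as introduction rules, so that computability of an
  explicitly given function can be established by decomposing its term.\<close>
lemma computable_id [intro!]: "computable_fun (\<lambda>x. x)"
proof (rule computableI[of "RPair RFst RSnd"])
  fix Q x
  have "ev Q (RPair RFst RSnd) x (prod_encode (fst (prod_decode x), snd (prod_decode x)))"
    by (intro ev.intros)
  then show "ev Q (RPair RFst RSnd) x x" by simp
qed

lemma computable_comp: "computable_fun f \<Longrightarrow> computable_fun g \<Longrightarrow> computable_fun (\<lambda>x. f (g x))"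
  unfolding computable_fun_iff by (blast intro: ev.evC)

lemma computable_Suc [intro!]: "computable_fun a \<Longrightarrow> computable_fun (\<lambda>x. Suc (a x))"
  using computable_comp[of Suc a] by (auto simp: computable_fun_iff intro: ev.intros)

lemma computable_fst [intro!]: "computable_fun a \<Longrightarrow> computable_fun (\<lambda>x. fst (prod_decode (a x)))"
  using computable_comp[of "\<lambda>x. fst (prod_decode x)" a]
  by (auto simp: computable_fun_iff intro: ev.intros)

lemma computable_snd [intro!]: "computable_fun a \<Longrightarrow> computable_fun (\<lambda>x. snd (prod_decode (a x)))"
  using computable_comp[of "\<lambda>x. snd (prod_decode x)" a]
  by (auto simp: computable_fun_iff intro: ev.intros)

lemma computable_pair [intro!]:
  "computable_fun a \<Longrightarrow> computable_fun b \<Longrightarrow> computable_fun (\<lambda>x. prod_encode (a x, b x))"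
  unfolding computable_fun_iff by (blast intro: ev.evP)

lemma computable_const [intro!]: "computable_fun (\<lambda>x. c)"
proof (induction c)
  case 0 show ?case by (rule computableI[of RZero]) (rule ev.evZ)
next
  case (Suc c) then show ?case by (rule computable_Suc)
qed

fun precf :: "(nat \<Rightarrow> nat) \<Rightarrow> (nat \<Rightarrow> nat) \<Rightarrow> nat \<Rightarrow> nat \<Rightarrow> nat" where
  "precf f g x 0 = f x"
| "precf f g x (Suc n) = g (prod_encode (x, prod_encode (n, precf f g x n)))"

lemma ev_rec:
  assumes "\<And>x. ev Q Pf x (f x)" and "\<And>x. ev Q Pg x (g x)"
  shows "ev Q (RRec Pf Pg) (prod_encode (x, n)) (precf f g x n)"
proof (induction n)
  case 0 then show ?case by (auto intro: ev.evR0 assms)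
next
  case (Suc n) show ?case by (rule ev.evRS[OF _ Suc]) (auto intro: assms)
qed

lemma computable_prec:
  assumes "computable_fun f" "computable_fun g" "computable_fun a" "computable_fun b"
  shows "computable_fun (\<lambda>x. precf f g (a x) (b x))"
proof -
  obtain Pf Pg Pa Pb where h: "\<And>Q x. ev Q Pf x (f x)" "\<And>Q x. ev Q Pg x (g x)"
     "\<And>Q x. ev Q Pa x (a x)" "\<And>Q x. ev Q Pb x (b x)"
    using assms unfolding computable_fun_iff by metis
  show ?thesis
    by (rule computableI[of "RComp (RRec Pf Pg) (RPair Pa Pb)"])
       (intro ev.evC[OF ev.evP[OF h(3) h(4)]] ev_rec h)
qed

lemma computable_add [intro!]:
  assumes "computable_fun a" "computable_fun b"
  shows "computable_fun (\<lambda>x. a x + b x)"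
proof -
  let ?g = "\<lambda>w. Suc (snd (prod_decode (snd (prod_decode w))))"
  have rec: "precf (\<lambda>x. x) ?g x n = x + n" for x n by (induction n) auto
  show ?thesis
    by (rule computable_cong[OF computable_prec[of "\<lambda>x. x" ?g a b]]) (use assms in \<open>auto simp: rec\<close>)
qed

lemma computable_sub [intro!]:
  assumes "computable_fun a" "computable_fun b"
  shows "computable_fun (\<lambda>x. a x - b x)"
proof -
  let ?pred = "\<lambda>w. fst (prod_decode (snd (prod_decode w)))"
  have rec_pred: "precf (\<lambda>x. 0) ?pred x n = n - Suc 0" for x n by (induction n) auto
  have "computable_fun (\<lambda>x. x - Suc 0)"
    by (rule computable_cong[OF computable_prec[of "\<lambda>x. 0" ?pred "\<lambda>x. 0" "\<lambda>x. x"]])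
       (auto simp: rec_pred)
  then have pred: "computable_fun (\<lambda>x. c x - Suc 0)" if "computable_fun c" for c
    using computable_comp that by blast
  let ?g = "\<lambda>w. snd (prod_decode (snd (prod_decode w))) - Suc 0"
  have rec: "precf (\<lambda>x. x) ?g x n = x - n" for x n by (induction n) auto
  show ?thesis
    by (rule computable_cong[OF computable_prec[of "\<lambda>x. x" ?g a b]])
       (use assms in \<open>auto simp: rec intro: pred\<close>)
qed

lemma computable_mult [intro!]:
  assumes "computable_fun a" "computable_fun b"
  shows "computable_fun (\<lambda>x. a x * b x)"
proof -
  let ?g = "\<lambda>w. snd (prod_decode (snd (prod_decode w))) + fst (prod_decode w)"
  have rec: "precf (\<lambda>x. 0) ?g x n = n * x" for x n by (induction n) auto
  show ?thesis
    by (rule computable_cong[OF computable_prec[of "\<lambda>x. 0" ?g b a]]) (use assms in \<open>auto simp: rec\<close>)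
qed

lemma computable_eq [intro!]:
  "computable_fun a \<Longrightarrow> computable_fun b \<Longrightarrow> computable_fun (\<lambda>x. of_bool (a x = b x))"
  by (rule computable_cong[of "\<lambda>x. 1 - ((a x - b x) + (b x - a x))"]) auto

lemma computable_less [intro!]:
  "computable_fun a \<Longrightarrow> computable_fun b \<Longrightarrow> computable_fun (\<lambda>x. of_bool (a x < b x))"
  by (rule computable_cong[of "\<lambda>x. 1 - (1 - (b x - a x))"]) auto

lemma computable_not [intro!]:
  "computable_fun (\<lambda>x. of_bool (P x)) \<Longrightarrow> computable_fun (\<lambda>x. of_bool (\<not> P x))"
  by (rule computable_cong[of "\<lambda>x. 1 - of_bool (P x)"]) auto

lemma computable_and [intro!]:
  "computable_fun (\<lambda>x. of_bool (P x)) \<Longrightarrow> computable_fun (\<lambda>x. of_bool (R x))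
   \<Longrightarrow> computable_fun (\<lambda>x. of_bool (P x \<and> R x))"
  by (rule computable_cong[of "\<lambda>x. of_bool (P x) * of_bool (R x)"]) auto

lemma computable_or [intro!]:
  assumes "computable_fun (\<lambda>x. of_bool (P x))" and "computable_fun (\<lambda>x. of_bool (R x))"
  shows "computable_fun (\<lambda>x. of_bool (P x \<or> R x))"
proof -
  have "computable_fun (\<lambda>x. of_bool (\<not> (\<not> P x \<and> \<not> R x)))"
    using assms by (intro computable_not computable_and)
  then show ?thesis by (rule computable_cong) auto
qed

lemma computable_imp [intro!]:
  assumes "computable_fun (\<lambda>x. of_bool (P x))" and "computable_fun (\<lambda>x. of_bool (R x))"
  shows "computable_fun (\<lambda>x. of_bool (P x \<longrightarrow> R x))"
proof -
  have "computable_fun (\<lambda>x. of_bool (\<not> P x \<or> R x))"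
    using assms by (intro computable_not computable_or)
  then show ?thesis by (rule computable_cong) auto
qed

lemma computable_if [intro!]:
  assumes "computable_fun (\<lambda>x. of_bool (P x))" "computable_fun a" "computable_fun b"
  shows "computable_fun (\<lambda>x. if P x then a x else b x)"
proof -
  let ?g = "\<lambda>w. fst (prod_decode (fst (prod_decode w)))"
  have rec: "precf (\<lambda>x. snd (prod_decode x)) ?g (prod_encode (u, v)) n = (if n = 0 then v else u)"
    for u v n by (cases n) auto
  show ?thesis
    by (rule computable_cong[OF computable_prec[of "\<lambda>x. snd (prod_decode x)" ?g
          "\<lambda>x. prod_encode (a x, b x)" "\<lambda>x. of_bool (P x)"]]) (use assms in \<open>auto simp: rec\<close>)
qed

lemma computable_iter [intro!]:
  assumes "computable_fun f" "computable_fun a" "computable_fun b"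
  shows "computable_fun (\<lambda>x. (f ^^ (b x)) (a x))"
proof -
  let ?g = "\<lambda>w. f (snd (prod_decode (snd (prod_decode w))))"
  have rec: "precf (\<lambda>x. x) ?g x n = (f ^^ n) x" for x n by (induction n) auto
  show ?thesis
    by (rule computable_cong[OF computable_prec[of "\<lambda>x. x" ?g a b]])
       (use assms in \<open>auto simp: rec intro: computable_comp\<close>)
qed

text \<open>Bounded quantifiers; the matrix is a computable predicate of the (encoded) pair of the
  outer argument and the bound variable.\<close>
lemma computable_bex [intro!]:
  assumes hP: "computable_fun (\<lambda>z. of_bool (P (fst (prod_decode z)) (snd (prod_decode z))))"
    and hn: "computable_fun n"
  shows "computable_fun (\<lambda>x. of_bool (\<exists>j<n x. P x j))"
proof -
  let ?g = "\<lambda>w. of_bool (snd (prod_decode (snd (prod_decode w))) \<noteq> 0 \<or>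
      P (fst (prod_decode w)) (fst (prod_decode (snd (prod_decode w)))))"
  have rec: "precf (\<lambda>x. 0) ?g x m = of_bool (\<exists>j<m. P x j)" for x m
    by (induction m) (auto simp: less_Suc_eq)
  have "computable_fun (\<lambda>w. fst (prod_decode w))"
    and "computable_fun (\<lambda>w. fst (prod_decode (snd (prod_decode w))))"
    using computable_fst[OF computable_id] computable_fst[OF computable_snd[OF computable_id]] by simp_all
  then have "computable_fun (\<lambda>w. of_bool (P (fst (prod_decode w)) (fst (prod_decode (snd (prod_decode w))))))"
    using computable_comp[OF hP computable_pair] by simp
  then have "computable_fun ?g"
    by (intro computable_or computable_not computable_eq computable_snd computable_const computable_id)
  then have "computable_fun (\<lambda>x. precf (\<lambda>x. 0) ?g x (n x))"
    using computable_prec[of "\<lambda>x. 0" ?g "\<lambda>x. x" n] hn by blast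
  then show ?thesis by (rule computable_cong) (simp only: rec)
qed

lemma computable_ball [intro!]:
  assumes "computable_fun (\<lambda>z. of_bool (P (fst (prod_decode z)) (snd (prod_decode z))))"
    and "computable_fun n"
  shows "computable_fun (\<lambda>x. of_bool (\<forall>j<n x. P x j))"
proof -
  have "computable_fun (\<lambda>x. of_bool (\<not> (\<exists>j<n x. \<not> P x j)))" using assms by (intro computable_not computable_bex) auto
  then show ?thesis by (rule computable_cong) auto
qed

text \<open>Division with remainder by 9 (needed to parse program numbers): iterate the successor
  on the pair (quotient, remainder).\<close>
definition divmod9_step :: "nat \<Rightarrow> nat" where
  "divmod9_step s = (if snd (prod_decode s) = 8 then prod_encode (Suc (fst (prod_decode s)), 0)
        else prod_encode (fst (prod_decode s), Suc (snd (prod_decode s))))"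

lemma divmod9_iter: "(divmod9_step ^^ n) (prod_encode (0, 0)) = prod_encode (n div 9, n mod 9)"
proof (induction n)
  case (Suc n)
  have "(divmod9_step ^^ Suc n) (prod_encode (0, 0)) = divmod9_step (prod_encode (n div 9, n mod 9))"
    using Suc by simp
  also have "\<dots> = prod_encode (Suc n div 9, Suc n mod 9)"
    unfolding divmod9_step_def
    by (cases "n mod 9 = 8") (simp_all add: div_Suc mod_Suc del: mod_Suc_eq div_Suc_eq_div_add3)
  finally show ?case .
qed simp

lemma computable_divmod9: "computable_fun (\<lambda>x. prod_encode (x div 9, x mod 9))"
proof -
  have step: "computable_fun divmod9_step"
    unfolding divmod9_step_def
    by (intro computable_if computable_eq computable_pair computable_Suc computable_fst computable_snd
        computable_const computable_id)
  show ?thesis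
    by (rule computable_cong[OF computable_iter[of divmod9_step "\<lambda>x. prod_encode (0, 0)" "\<lambda>x. x"]])
       (use step in \<open>auto simp: divmod9_iter\<close>)
qed

lemma computable_div9 [intro!]: "computable_fun a \<Longrightarrow> computable_fun (\<lambda>x. a x div 9)"
  using computable_comp[OF computable_fst[OF computable_divmod9]] by simp

lemma computable_mod9 [intro!]: "computable_fun a \<Longrightarrow> computable_fun (\<lambda>x. a x mod 9)"
  using computable_comp[OF computable_snd[OF computable_divmod9]] by simp

section \<open>Numbers as lists\<close>

text \<open>Destructors of the list coding list_encode, as total functions on numbers; lvalid n l says
  that the list coded by l has an n-th entry.\<close>
definition ltl :: "nat \<Rightarrow> nat" where "ltl l = snd (prod_decode (l - 1))"
definition lhd :: "nat \<Rightarrow> nat" where "lhd l = fst (prod_decode (l - 1))"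
definition lnth :: "nat \<Rightarrow> nat \<Rightarrow> nat" where "lnth l n = lhd ((ltl ^^ n) l)"
definition lvalid :: "nat \<Rightarrow> nat \<Rightarrow> bool" where "lvalid n l \<longleftrightarrow> (ltl ^^ n) l \<noteq> 0"

lemma prod_decode_0 [simp]: "prod_decode 0 = (0, 0)"
proof -
  have "prod_encode (0, 0) = 0" by (simp add: prod_encode_def)
  then show ?thesis by (metis prod_encode_inverse)
qed

lemma ltl_iter: "(ltl ^^ n) (list_encode xs) = list_encode (drop n xs)"
proof (induction n)
  case (Suc n)
  have "ltl (list_encode ys) = list_encode (tl ys)" for ys by (cases ys) (simp_all add: ltl_def)
  with Suc show ?case by (simp add: drop_Suc tl_drop)
qed simp

lemma lvalid_enc: "lvalid n (list_encode xs) \<longleftrightarrow> n < length xs"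
proof -
  have "list_encode (drop n xs) \<noteq> 0 \<longleftrightarrow> drop n xs \<noteq> []"
    by (cases "drop n xs") auto
  then show ?thesis unfolding lvalid_def ltl_iter by auto
qed

lemma lnth_enc: "n < length xs \<Longrightarrow> lnth (list_encode xs) n = xs ! n"
  by (simp add: lnth_def ltl_iter lhd_def Cons_nth_drop_Suc[symmetric])

lemma lvalid_mono: "lvalid n l \<Longrightarrow> k \<le> n \<Longrightarrow> lvalid k l"
  using lvalid_enc[of _ "list_decode l"] by simp

lemma length_le_list_encode: "length xs \<le> list_encode xs"
proof (induction xs)
  case (Cons a xs) then show ?case using le_prod_encode_2[of "list_encode xs" a] by simp
qed simp

text \<open>Entries of the list coded by c satisfying P; since every entry index is below the code,
  this is a bounded, hence computable, search.\<close>
definition has_entry :: "nat \<Rightarrow> (nat \<Rightarrow> bool) \<Rightarrow> bool" where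
  "has_entry c P \<longleftrightarrow> (\<exists>j<c. lvalid j c \<and> P (lnth c j))"

lemma has_entry_enc: "has_entry (list_encode L) P \<longleftrightarrow> (\<exists>u\<in>set L. P u)"
proof
  assume "has_entry (list_encode L) P"
  then obtain j where "lvalid j (list_encode L)" "P (lnth (list_encode L) j)"
    unfolding has_entry_def by blast
  then show "\<exists>u\<in>set L. P u" by (metis lnth_enc lvalid_enc nth_mem)
next
  assume "\<exists>u\<in>set L. P u"
  then obtain j where "j < length L" "P (L ! j)" by (metis in_set_conv_nth)
  moreover have "j < list_encode L" using calculation length_le_list_encode[of L] by linarith
  ultimately show "has_entry (list_encode L) P"
    unfolding has_entry_def by (metis lnth_enc lvalid_enc)
qed

lemma computable_ltl [intro!]: "computable_fun a \<Longrightarrow> computable_fun (\<lambda>x. ltl (a x))"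
  unfolding ltl_def by (intro computable_snd computable_sub computable_const)

lemma computable_lnth [intro!]:
  "computable_fun a \<Longrightarrow> computable_fun b \<Longrightarrow> computable_fun (\<lambda>x. lnth (a x) (b x))"
  unfolding lnth_def lhd_def using computable_ltl[OF computable_id] by (intro computable_fst computable_sub
      computable_iter computable_const) simp_all

lemma computable_lvalid [intro!]:
  "computable_fun a \<Longrightarrow> computable_fun b \<Longrightarrow> computable_fun (\<lambda>x. of_bool (lvalid (b x) (a x)))"
  unfolding lvalid_def using computable_ltl[OF computable_id]
  by (intro computable_not computable_eq computable_iter computable_const) simp_all

definition list_orc :: "nat \<Rightarrow> orc" where
  "list_orc ob x = (if lvalid x ob then Some (lnth ob x \<noteq> 0) else None)"

lemma list_orc_str_code: "list_orc (str_code \<sigma>) = str_orc \<sigma>"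
  by (rule ext) (simp add: list_orc_def str_orc_def str_code_def lvalid_enc lnth_enc)

lemma list_orc_0: "list_orc 0 = empty_orc"
  using list_orc_str_code[of "[]"] by (simp add: str_code_def str_orc_def empty_orc_def)

lemma prefix_restr: "l \<le> p \<Longrightarrow> prefix (restr X l) (restr X p)"
  unfolding restr_def prefix_def by (metis le_add_diff_inverse map_append upt_add_eq_append zero_le)

lemma length_restr [simp]: "length (restr X l) = l"
  by (simp add: restr_def)

lemma nth_restr [simp]: "i < l \<Longrightarrow> restr X l ! i \<longleftrightarrow> i \<in> X"
  by (simp add: restr_def)

lemma lvalid_str_code: "lvalid i (str_code \<sigma>) \<longleftrightarrow> i < length \<sigma>"
  by (simp add: str_code_def lvalid_enc)

lemma lnth_str_code: "i < length \<sigma> \<Longrightarrow> lnth (str_code \<sigma>) i = of_bool (\<sigma> ! i)"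
  by (simp add: str_code_def lnth_enc)

section \<open>Certificates for evaluations\<close>

text \<open>A claim is a number of one of two kinds: ev_claim ob p x y asserts that program number p,
  run with oracle list_orc ob on input x, outputs y; code_claim p asserts that p is the code of a
  program.  A claim is justified by a collection of earlier claims if it follows from them by one
  evaluation rule.  The collection is abstracted as E, where E R means that some earlier claim
  satisfies R: for lists this is membership, for coded lists a bounded search.\<close>
definition ev_claim :: "nat \<Rightarrow> nat \<Rightarrow> nat \<Rightarrow> nat \<Rightarrow> nat" where
  "ev_claim ob p x y = prod_encode (0, prod_encode (ob, prod_encode (p, prod_encode (x, y))))"
definition code_claim :: "nat \<Rightarrow> nat" where
  "code_claim p = prod_encode (1, p)"

definition ctag :: "nat \<Rightarrow> nat" where "ctag u = fst (prod_decode u)"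
definition corc :: "nat \<Rightarrow> nat" where "corc u = fst (prod_decode (snd (prod_decode u)))"
definition cprog :: "nat \<Rightarrow> nat" where
  "cprog u = fst (prod_decode (snd (prod_decode (snd (prod_decode u)))))"
definition carg :: "nat \<Rightarrow> nat" where
  "carg u = fst (prod_decode (snd (prod_decode (snd (prod_decode (snd (prod_decode u)))))))"
definition cval :: "nat \<Rightarrow> nat" where
  "cval u = snd (prod_decode (snd (prod_decode (snd (prod_decode (snd (prod_decode u)))))))"
definition ccode :: "nat \<Rightarrow> nat" where "ccode u = snd (prod_decode u)"

lemma ev_claim_sel [simp]: "ctag (ev_claim ob p x y) = 0" "corc (ev_claim ob p x y) = ob"
  "cprog (ev_claim ob p x y) = p" "carg (ev_claim ob p x y) = x" "cval (ev_claim ob p x y) = y"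
  by (simp_all add: ev_claim_def ctag_def corc_def cprog_def carg_def cval_def)

lemma code_claim_sel [simp]: "ctag (code_claim p) = 1" "ccode (code_claim p) = p"
  by (simp_all add: code_claim_def ctag_def ccode_def)

definition is_ev_claim :: "nat \<Rightarrow> nat \<Rightarrow> nat \<Rightarrow> nat \<Rightarrow> bool" where
  "is_ev_claim u ob p x \<longleftrightarrow> ctag u = 0 \<and> corc u = ob \<and> cprog u = p \<and> carg u = x"

definition claim_holds :: "nat \<Rightarrow> bool" where
  "claim_holds u \<longleftrightarrow> (ctag u = 0 \<longrightarrow> ev (list_orc (corc u)) (dec (cprog u)) (carg u) (cval u))
                   \<and> (ctag u = 1 \<longrightarrow> ccode u \<in> range code)"

lemma is_ev_claim_holds:
  "is_ev_claim u ob p x \<Longrightarrow> claim_holds u \<Longrightarrow> ev (list_orc ob) (dec p) x (cval u)"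
  by (simp add: is_ev_claim_def claim_holds_def)

definition base_rule :: "nat \<Rightarrow> bool" where
  "base_rule e \<longleftrightarrow>
     (cprog e = 0 \<and> cval e = 0) \<or> (cprog e = 1 \<and> cval e = Suc (carg e))
   \<or> (cprog e = 2 \<and> cval e = fst (prod_decode (carg e)))
   \<or> (cprog e = 3 \<and> cval e = snd (prod_decode (carg e)))
   \<or> (cprog e = 4 \<and> lvalid (carg e) (corc e) \<and> cval e = of_bool (lnth (corc e) (carg e) \<noteq> 0))
   \<or> (4 < cprog e \<and> cprog e mod 9 < 5 \<and> cval e = 0)"

definition comp_rule :: "((nat \<Rightarrow> bool) \<Rightarrow> bool) \<Rightarrow> nat \<Rightarrow> bool" where
  "comp_rule E e \<longleftrightarrow> 4 < cprog e \<and> cprog e mod 9 = 5 \<and>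
     E (\<lambda>u. is_ev_claim u (corc e) (right_sub (cprog e)) (carg e) \<and>
       E (\<lambda>u'. is_ev_claim u' (corc e) (left_sub (cprog e)) (cval u) \<and> cval u' = cval e))"

definition pair_rule :: "((nat \<Rightarrow> bool) \<Rightarrow> bool) \<Rightarrow> nat \<Rightarrow> bool" where
  "pair_rule E e \<longleftrightarrow> 4 < cprog e \<and> cprog e mod 9 = 6 \<and>
     E (\<lambda>u. is_ev_claim u (corc e) (left_sub (cprog e)) (carg e) \<and>
       E (\<lambda>u'. is_ev_claim u' (corc e) (right_sub (cprog e)) (carg e) \<and>
         cval e = prod_encode (cval u, cval u')))"

definition rec0_rule :: "((nat \<Rightarrow> bool) \<Rightarrow> bool) \<Rightarrow> nat \<Rightarrow> bool" where
  "rec0_rule E e \<longleftrightarrow> 4 < cprog e \<and> cprog e mod 9 = 7 \<and> snd (prod_decode (carg e)) = 0 \<and>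
     E (\<lambda>u. is_ev_claim u (corc e) (left_sub (cprog e)) (fst (prod_decode (carg e))) \<and> cval u = cval e)"

definition recS_rule :: "((nat \<Rightarrow> bool) \<Rightarrow> bool) \<Rightarrow> nat \<Rightarrow> bool" where
  "recS_rule E e \<longleftrightarrow> 4 < cprog e \<and> cprog e mod 9 = 7 \<and> snd (prod_decode (carg e)) \<noteq> 0 \<and>
     E (\<lambda>u. is_ev_claim u (corc e) (cprog e)
             (prod_encode (fst (prod_decode (carg e)), snd (prod_decode (carg e)) - 1)) \<and>
       E (\<lambda>u'. is_ev_claim u' (corc e) (right_sub (cprog e))
             (prod_encode (fst (prod_decode (carg e)), prod_encode (snd (prod_decode (carg e)) - 1, cval u)))
         \<and> cval u' = cval e))"

definition mu_rule :: "((nat \<Rightarrow> bool) \<Rightarrow> bool) \<Rightarrow> nat \<Rightarrow> bool" where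
  "mu_rule E e \<longleftrightarrow> 4 < cprog e \<and> cprog e mod 9 = 8 \<and>
     E (\<lambda>u. is_ev_claim u (corc e) (cprog e div 9) (prod_encode (carg e, cval e)) \<and> cval u = 0) \<and>
     (\<forall>m<cval e. E (\<lambda>u. is_ev_claim u (corc e) (cprog e div 9) (prod_encode (carg e, m)) \<and> cval u \<noteq> 0))"

definition code_rule :: "((nat \<Rightarrow> bool) \<Rightarrow> bool) \<Rightarrow> nat \<Rightarrow> bool" where
  "code_rule E e \<longleftrightarrow> ccode e < 5
   \<or> (4 < ccode e \<and> (ccode e mod 9 = 5 \<or> ccode e mod 9 = 6 \<or> ccode e mod 9 = 7) \<and>
       E (\<lambda>u. u = code_claim (left_sub (ccode e))) \<and> E (\<lambda>u. u = code_claim (right_sub (ccode e))))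
   \<or> (4 < ccode e \<and> ccode e mod 9 = 8 \<and> E (\<lambda>u. u = code_claim (ccode e div 9)))"

definition justified :: "((nat \<Rightarrow> bool) \<Rightarrow> bool) \<Rightarrow> nat \<Rightarrow> bool" where
  "justified E e \<longleftrightarrow>
     (ctag e = 0 \<and> (base_rule e \<or> comp_rule E e \<or> pair_rule E e \<or> rec0_rule E e \<or> recS_rule E e
                   \<or> mu_rule E e))
   \<or> (ctag e = 1 \<and> code_rule E e)"

lemma base_rule_sound:
  assumes "base_rule e"
  shows "ev (list_orc (corc e)) (dec (cprog e)) (carg e) (cval e)"
  using assms unfolding base_rule_def
  by (elim disjE conjE) (simp_all add: dec_base dec_base[unfolded One_nat_def] dec_step(1) list_orc_def ev.intros)

lemma comp_rule_sound:
  assumes "comp_rule E e" and H: "\<And>R. E R \<Longrightarrow> \<exists>u. R u \<and> claim_holds u"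
  shows "ev (list_orc (corc e)) (dec (cprog e)) (carg e) (cval e)"
proof -
  from assms(1) have p: "4 < cprog e" "cprog e mod 9 = 5"
    and "E (\<lambda>u. is_ev_claim u (corc e) (right_sub (cprog e)) (carg e) \<and>
          E (\<lambda>u'. is_ev_claim u' (corc e) (left_sub (cprog e)) (cval u) \<and> cval u' = cval e))"
    unfolding comp_rule_def by auto
  from H[OF this(3)] obtain u where u: "is_ev_claim u (corc e) (right_sub (cprog e)) (carg e)" "claim_holds u"
    and "E (\<lambda>u'. is_ev_claim u' (corc e) (left_sub (cprog e)) (cval u) \<and> cval u' = cval e)" by blast
  from H[OF this(3)] obtain u' where u': "is_ev_claim u' (corc e) (left_sub (cprog e)) (cval u)"
    "cval u' = cval e" "claim_holds u'" by blast
  show ?thesis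
    using ev.evC[OF is_ev_claim_holds[OF u] is_ev_claim_holds[OF u'(1,3)]] u'(2) dec_step(2)[OF p] by simp
qed

lemma pair_rule_sound:
  assumes "pair_rule E e" and H: "\<And>R. E R \<Longrightarrow> \<exists>u. R u \<and> claim_holds u"
  shows "ev (list_orc (corc e)) (dec (cprog e)) (carg e) (cval e)"
proof -
  from assms(1) have p: "4 < cprog e" "cprog e mod 9 = 6"
    and "E (\<lambda>u. is_ev_claim u (corc e) (left_sub (cprog e)) (carg e) \<and>
          E (\<lambda>u'. is_ev_claim u' (corc e) (right_sub (cprog e)) (carg e) \<and>
            cval e = prod_encode (cval u, cval u')))"
    unfolding pair_rule_def by auto
  from H[OF this(3)] obtain u where u: "is_ev_claim u (corc e) (left_sub (cprog e)) (carg e)" "claim_holds u"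
    and "E (\<lambda>u'. is_ev_claim u' (corc e) (right_sub (cprog e)) (carg e) \<and>
            cval e = prod_encode (cval u, cval u'))" by blast
  from H[OF this(3)] obtain u' where u': "is_ev_claim u' (corc e) (right_sub (cprog e)) (carg e)"
    "cval e = prod_encode (cval u, cval u')" "claim_holds u'" by blast
  show ?thesis
    using ev.evP[OF is_ev_claim_holds[OF u] is_ev_claim_holds[OF u'(1,3)]] u'(2) dec_step(3)[OF p] by simp
qed

lemma rec0_rule_sound:
  assumes "rec0_rule E e" and H: "\<And>R. E R \<Longrightarrow> \<exists>u. R u \<and> claim_holds u"
  shows "ev (list_orc (corc e)) (dec (cprog e)) (carg e) (cval e)"
proof -
  from assms(1) have p: "4 < cprog e" "cprog e mod 9 = 7"
    and arg: "prod_decode (carg e) = (fst (prod_decode (carg e)), 0)"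
    and "E (\<lambda>u. is_ev_claim u (corc e) (left_sub (cprog e)) (fst (prod_decode (carg e))) \<and> cval u = cval e)"
    unfolding rec0_rule_def by (auto simp: prod_eq_iff)
  from H[OF this(4)] obtain u
    where "is_ev_claim u (corc e) (left_sub (cprog e)) (fst (prod_decode (carg e)))" "cval u = cval e"
      "claim_holds u" by blast
  then show ?thesis using ev.evR0[OF arg is_ev_claim_holds] dec_step(4)[OF p] by metis
qed

lemma recS_rule_sound:
  assumes "recS_rule E e" and H: "\<And>R. E R \<Longrightarrow> \<exists>u. R u \<and> claim_holds u"
  shows "ev (list_orc (corc e)) (dec (cprog e)) (carg e) (cval e)"
proof -
  define x n where "x = fst (prod_decode (carg e))" and "n = snd (prod_decode (carg e)) - 1"
  from assms(1) have p: "4 < cprog e" "cprog e mod 9 = 7"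
    and arg: "prod_decode (carg e) = (x, Suc n)"
    and "E (\<lambda>u. is_ev_claim u (corc e) (cprog e) (prod_encode (x, n)) \<and>
          E (\<lambda>u'. is_ev_claim u' (corc e) (right_sub (cprog e)) (prod_encode (x, prod_encode (n, cval u)))
             \<and> cval u' = cval e))"
    unfolding recS_rule_def x_def n_def by (auto simp: prod_eq_iff)
  from H[OF this(4)] obtain u where u: "is_ev_claim u (corc e) (cprog e) (prod_encode (x, n))" "claim_holds u"
    and "E (\<lambda>u'. is_ev_claim u' (corc e) (right_sub (cprog e)) (prod_encode (x, prod_encode (n, cval u)))
             \<and> cval u' = cval e)" by blast
  from H[OF this(3)] obtain u' where u': "is_ev_claim u' (corc e) (right_sub (cprog e))
      (prod_encode (x, prod_encode (n, cval u)))" "cval u' = cval e" "claim_holds u'" by blast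
  have "ev (list_orc (corc e)) (RRec (dec (left_sub (cprog e))) (dec (right_sub (cprog e))))
      (prod_encode (x, n)) (cval u)"
    using is_ev_claim_holds[OF u] dec_step(4)[OF p] by simp
  from ev.evRS[OF arg this is_ev_claim_holds[OF u'(1,3)]] show ?thesis
    using u'(2) dec_step(4)[OF p] by simp
qed

lemma mu_rule_sound:
  assumes "mu_rule E e" and H: "\<And>R. E R \<Longrightarrow> \<exists>u. R u \<and> claim_holds u"
  shows "ev (list_orc (corc e)) (dec (cprog e)) (carg e) (cval e)"
proof -
  let ?f = "dec (cprog e div 9)"
  from assms(1) have p: "4 < cprog e" "cprog e mod 9 = 8"
    and "E (\<lambda>u. is_ev_claim u (corc e) (cprog e div 9) (prod_encode (carg e, cval e)) \<and> cval u = 0)"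
    and below: "\<forall>m<cval e. E (\<lambda>u. is_ev_claim u (corc e) (cprog e div 9) (prod_encode (carg e, m)) \<and> cval u \<noteq> 0)"
    unfolding mu_rule_def by auto
  from H[OF this(3)] have zero: "ev (list_orc (corc e)) ?f (prod_encode (carg e, cval e)) 0"
    using is_ev_claim_holds by fastforce
  have "\<exists>k. ev (list_orc (corc e)) ?f (prod_encode (carg e, m)) (Suc k)" if "m < cval e" for m
  proof -
    from H below that obtain u where
      "is_ev_claim u (corc e) (cprog e div 9) (prod_encode (carg e, m))" "cval u \<noteq> 0" "claim_holds u"
      by blast
    then show ?thesis using is_ev_claim_holds not0_implies_Suc by metis
  qed
  then show ?thesis using ev.evM[OF zero] dec_step(5)[OF p] by simp
qed

lemma code_rule_sound:
  assumes "code_rule E e" and H: "\<And>R. E R \<Longrightarrow> \<exists>u. R u \<and> claim_holds u"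
  shows "ccode e \<in> range code"
proof -
  define q where "q = ccode e"
  have q: "q = q mod 9 + 9 * prod_encode (left_sub q, right_sub q)"
    by (simp add: left_sub_def right_sub_def)
  have sub: "p \<in> range code" if "E (\<lambda>u. u = code_claim p)" for p
    using H[OF that] by (auto simp: claim_holds_def)
  consider "q < 5"
    | "4 < q" "q mod 9 = 5 \<or> q mod 9 = 6 \<or> q mod 9 = 7" "left_sub q \<in> range code" "right_sub q \<in> range code"
    | "4 < q" "q mod 9 = 8" "q div 9 \<in> range code"
    using assms(1) sub unfolding code_rule_def q_def by blast
  then have "q \<in> range code"
  proof cases
    case 1
    then have "q \<in> {code RZero, code RSucc, code RFst, code RSnd, code ROrc}" by auto
    then show ?thesis by blast
  next
    case 2
    then obtain A B where "left_sub q = code A" "right_sub q = code B" by blast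
    with 2(2) q have "q = code (RComp A B) \<or> q = code (RPair A B) \<or> q = code (RRec A B)" by auto
    then show ?thesis by blast
  next
    case 3
    then obtain A where "q div 9 = code A" by blast
    with 3(2) have "q = code (RMu A)" using div_mult_mod_eq[of q 9] by simp
    then show ?thesis by blast
  qed
  then show ?thesis by (simp add: q_def)
qed

lemma justified_sound:
  assumes "justified E e" and H: "\<And>R. E R \<Longrightarrow> \<exists>u. R u \<and> claim_holds u"
  shows "claim_holds e"
proof -
  from assms(1) consider
      "ctag e = 0" "base_rule e \<or> comp_rule E e \<or> pair_rule E e \<or> rec0_rule E e \<or> recS_rule E e
                    \<or> mu_rule E e"
    | "ctag e = 1" "code_rule E e"
    unfolding justified_def by argo
  then show ?thesis
  proof cases
    case 1
    then have "ev (list_orc (corc e)) (dec (cprog e)) (carg e) (cval e)"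
      using base_rule_sound comp_rule_sound[OF _ H] pair_rule_sound[OF _ H] rec0_rule_sound[OF _ H]
        recS_rule_sound[OF _ H] mu_rule_sound[OF _ H] by blast
    with 1(1) show ?thesis by (simp add: claim_holds_def)
  next
    case 2
    with code_rule_sound[OF _ H] show ?thesis by (simp add: claim_holds_def)
  qed
qed

definition some_in :: "nat set \<Rightarrow> (nat \<Rightarrow> bool) \<Rightarrow> bool" where
  "some_in S R \<longleftrightarrow> (\<exists>u\<in>S. R u)"

definition cert_list :: "nat list \<Rightarrow> bool" where
  "cert_list L \<longleftrightarrow> (\<forall>i<length L. justified (some_in (set (take i L))) (L ! i))"

lemma cert_list_sound: "cert_list L \<Longrightarrow> u \<in> set L \<Longrightarrow> claim_holds u"
proof -
  have "claim_holds (L ! i)" if "cert_list L" "i < length L" for i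
    using that
  proof (induction i rule: less_induct)
    case (less i)
    have "justified (some_in (set (take i L))) (L ! i)"
      using less.prems unfolding cert_list_def by blast
    moreover have "\<exists>u. R u \<and> claim_holds u" if "some_in (set (take i L)) R" for R
    proof -
      from that obtain j where "j < i" "j < length L" "R (L ! j)"
        unfolding some_in_def by (auto simp: in_set_conv_nth)
      then show ?thesis using less by auto
    qed
    ultimately show ?case by (rule justified_sound)
  qed
  then show "cert_list L \<Longrightarrow> u \<in> set L \<Longrightarrow> claim_holds u" by (metis in_set_conv_nth)
qed

text \<open>Justification is monotone in the set of earlier claims: all queries occur positively.\<close>
lemma justified_mono:
  assumes "justified (some_in S) e" and "S \<subseteq> S'"
  shows "justified (some_in S') e"
proof -
  have "some_in S' R'" if "some_in S R" "\<And>u. R u \<Longrightarrow> R' u" for R R'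
    using that assms(2) unfolding some_in_def by blast
  then show ?thesis using assms(1)
    unfolding justified_def comp_rule_def pair_rule_def rec0_rule_def recS_rule_def mu_rule_def code_rule_def
    by (smt (verit))
qed

lemma cert_list_append: "cert_list L1 \<Longrightarrow> cert_list L2 \<Longrightarrow> cert_list (L1 @ L2)"
  unfolding cert_list_def
proof (intro allI impI)
  fix i assume L1: "\<forall>i<length L1. justified (some_in (set (take i L1))) (L1 ! i)"
    and L2: "\<forall>i<length L2. justified (some_in (set (take i L2))) (L2 ! i)"
    and i: "i < length (L1 @ L2)"
  show "justified (some_in (set (take i (L1 @ L2)))) ((L1 @ L2) ! i)"
  proof (cases "i < length L1")
    case True then show ?thesis using L1 by (simp add: nth_append)
  next
    case False
    define j where "j = i - length L1"
    have j: "j < length L2" "i = length L1 + j" using False i j_def by auto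
    have "set (take j L2) \<subseteq> set (take i (L1 @ L2))" using j by auto
    with L2 j show ?thesis by (auto simp: nth_append intro: justified_mono)
  qed
qed

lemma cert_list_extend:
  assumes "cert_list L" and "justified (some_in (set L)) e"
  shows "\<exists>L'. cert_list L' \<and> e \<in> set L'"
proof -
  have "cert_list (L @ [e])" using assms unfolding cert_list_def by (auto simp: nth_append less_Suc_eq)
  then show ?thesis by auto
qed

lemma cert_list_merge:
  assumes mono: "\<And>m L L'. T m L \<Longrightarrow> set L \<subseteq> set L' \<Longrightarrow> T m L'"
    and each: "\<forall>m<(n::nat). \<exists>L. cert_list L \<and> T m L"
  shows "\<exists>L. cert_list L \<and> (\<forall>m<n. T m L)"
  using each
proof (induction n)
  case 0 show ?case by (intro exI[of _ "[]"]) (simp add: cert_list_def)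
next
  case (Suc n)
  then obtain L1 where L1: "cert_list L1" "\<forall>m<n. T m L1" by (meson less_SucI)
  from Suc.prems obtain L2 where L2: "cert_list L2" "T n L2" by blast
  have "\<forall>m<Suc n. T m (L1 @ L2)"
    using L1 L2 mono less_Suc_eq by (metis Un_upper1 Un_upper2 set_append)
  then show ?case using L1 L2 cert_list_append by blast
qed

lemma some_inI: "u \<in> S \<Longrightarrow> R u \<Longrightarrow> some_in S R"
  by (auto simp: some_in_def)

lemma cert_list_single: "justified (some_in {}) e \<Longrightarrow> \<exists>L. cert_list L \<and> e \<in> set L"
  using cert_list_extend[of "[]" e] by (simp add: cert_list_def)

lemma comp_rule_complete:
  assumes "ev_claim ob (code B) x y \<in> S" and "ev_claim ob (code A) y z \<in> S"
  shows "justified (some_in S) (ev_claim ob (code (RComp A B)) x z)"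
proof -
  have "some_in S (\<lambda>u. is_ev_claim u ob (code B) x \<and>
      some_in S (\<lambda>u'. is_ev_claim u' ob (code A) (cval u) \<and> cval u' = z))"
    by (rule some_inI[OF assms(1)]) (auto simp: is_ev_claim_def intro: some_inI[OF assms(2)])
  then show ?thesis by (simp add: justified_def comp_rule_def)
qed

lemma pair_rule_complete:
  assumes "ev_claim ob (code A) x y \<in> S" and "ev_claim ob (code B) x z \<in> S"
  shows "justified (some_in S) (ev_claim ob (code (RPair A B)) x (prod_encode (y, z)))"
proof -
  have "some_in S (\<lambda>u. is_ev_claim u ob (code A) x \<and>
      some_in S (\<lambda>u'. is_ev_claim u' ob (code B) x \<and> prod_encode (y, z) = prod_encode (cval u, cval u')))"
    by (rule some_inI[OF assms(1)]) (auto simp: is_ev_claim_def intro: some_inI[OF assms(2)])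
  then show ?thesis by (simp add: justified_def pair_rule_def)
qed

lemma rec0_rule_complete:
  assumes "ev_claim ob (code A) x y \<in> S" and "prod_decode z = (x, 0)"
  shows "justified (some_in S) (ev_claim ob (code (RRec A B)) z y)"
proof -
  have "some_in S (\<lambda>u. is_ev_claim u ob (code A) x \<and> cval u = y)"
    by (rule some_inI[OF assms(1)]) (simp add: is_ev_claim_def)
  then show ?thesis using assms(2) by (simp add: justified_def rec0_rule_def)
qed

lemma recS_rule_complete:
  assumes "ev_claim ob (code (RRec A B)) (prod_encode (x, n)) r \<in> S"
    and "ev_claim ob (code B) (prod_encode (x, prod_encode (n, r))) y \<in> S"
    and "prod_decode z = (x, Suc n)"
  shows "justified (some_in S) (ev_claim ob (code (RRec A B)) z y)"
proof -
  have "some_in S (\<lambda>u. is_ev_claim u ob (code (RRec A B)) (prod_encode (x, n)) \<and>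
      some_in S (\<lambda>u'. is_ev_claim u' ob (code B) (prod_encode (x, prod_encode (n, cval u))) \<and> cval u' = y))"
    by (rule some_inI[OF assms(1)]) (auto simp: is_ev_claim_def intro: some_inI[OF assms(2)])
  then show ?thesis using assms(3) by (simp add: justified_def recS_rule_def)
qed

lemma mu_rule_complete:
  assumes "ev_claim ob (code A) (prod_encode (x, n)) 0 \<in> S"
    and "\<forall>m<n. \<exists>k. ev_claim ob (code A) (prod_encode (x, m)) (Suc k) \<in> S"
  shows "justified (some_in S) (ev_claim ob (code (RMu A)) x n)"
proof -
  have "some_in S (\<lambda>u. is_ev_claim u ob (code A) (prod_encode (x, n)) \<and> cval u = 0)"
    by (rule some_inI[OF assms(1)]) (simp add: is_ev_claim_def)
  moreover have "\<forall>m<n. some_in S (\<lambda>u. is_ev_claim u ob (code A) (prod_encode (x, m)) \<and> cval u \<noteq> 0)"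
  proof (intro allI impI)
    fix m assume "m < n"
    then obtain k where "ev_claim ob (code A) (prod_encode (x, m)) (Suc k) \<in> S" using assms(2) by blast
    then show "some_in S (\<lambda>u. is_ev_claim u ob (code A) (prod_encode (x, m)) \<and> cval u \<noteq> 0)"
      by (rule some_inI) (simp add: is_ev_claim_def)
  qed
  ultimately show ?thesis by (simp add: justified_def mu_rule_def)
qed

lemma ev_claim_certified:
  assumes "ev (list_orc ob) P x y"
  shows "\<exists>L. cert_list L \<and> ev_claim ob (code P) x y \<in> set L"
proof -
  have "Q = list_orc ob \<Longrightarrow> \<exists>L. cert_list L \<and> ev_claim ob (code P) x y \<in> set L"
    if "ev Q P x y" for Q P x y
    using that
  proof (induction rule: ev.induct)
    case (evO x b)
    then show ?case
      by (intro cert_list_single) (auto simp: justified_def base_rule_def list_orc_def split: if_splits)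
  next
    case (evC g x y f z)
    then obtain L1 L2 where "cert_list L1" "ev_claim ob (code g) x y \<in> set L1"
      "cert_list L2" "ev_claim ob (code f) y z \<in> set L2" by blast
    then show ?case
      by (intro cert_list_extend[of "L1 @ L2"] cert_list_append comp_rule_complete[where y = y]) simp_all
  next
    case (evP f x y g z)
    then obtain L1 L2 where "cert_list L1" "ev_claim ob (code f) x y \<in> set L1"
      "cert_list L2" "ev_claim ob (code g) x z \<in> set L2" by blast
    then show ?case
      by (intro cert_list_extend[of "L1 @ L2"] cert_list_append pair_rule_complete) simp_all
  next
    case (evR0 z x f y g)
    then obtain L where "cert_list L" "ev_claim ob (code f) x y \<in> set L" by blast
    with evR0.hyps(1) show ?case by (intro cert_list_extend[of L] rec0_rule_complete)
  next
    case (evRS z x n f g r y)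
    then obtain L1 L2 where "cert_list L1" "ev_claim ob (code (RRec f g)) (prod_encode (x, n)) r \<in> set L1"
      "cert_list L2" "ev_claim ob (code g) (prod_encode (x, prod_encode (n, r))) y \<in> set L2" by blast
    with evRS.hyps(1) show ?case
      by (intro cert_list_extend[of "L1 @ L2"] cert_list_append recS_rule_complete[where r = r]) simp_all
  next
    case (evM f x n)
    then obtain L1 where L1: "cert_list L1" "ev_claim ob (code f) (prod_encode (x, n)) 0 \<in> set L1" by blast
    have "\<exists>L2. cert_list L2 \<and> (\<forall>m<n. \<exists>k. ev_claim ob (code f) (prod_encode (x, m)) (Suc k) \<in> set L2)"
      by (rule cert_list_merge) (use evM in blast)+
    then obtain L2 where "cert_list L2"
      "\<forall>m<n. \<exists>k. ev_claim ob (code f) (prod_encode (x, m)) (Suc k) \<in> set L2" by blast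
    with L1 show ?case
      by (intro cert_list_extend[of "L1 @ L2"] cert_list_append mu_rule_complete) auto
  qed (intro cert_list_single, simp add: justified_def base_rule_def)+
  with assms show ?thesis by blast
qed

lemma code_rule_complete:
  assumes "code_claim (code A) \<in> S" and "code_claim (code B) \<in> S"
  shows "justified (some_in S) (code_claim (code (RComp A B)))"
    and "justified (some_in S) (code_claim (code (RPair A B)))"
    and "justified (some_in S) (code_claim (code (RRec A B)))"
    and "justified (some_in S) (code_claim (code (RMu A)))"
  using some_inI[OF assms(1), of "\<lambda>u. u = code_claim (code A)"]
    some_inI[OF assms(2), of "\<lambda>u. u = code_claim (code B)"]
  by (simp_all add: justified_def code_rule_def)

lemma code_claim_certified: "\<exists>L. cert_list L \<and> code_claim (code P) \<in> set L"
proof (induction P)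
  case (RComp A B)
  then obtain LA LB where "cert_list LA" "code_claim (code A) \<in> set LA"
    "cert_list LB" "code_claim (code B) \<in> set LB" by blast
  then show ?case by (intro cert_list_extend[of "LA @ LB"] cert_list_append code_rule_complete) simp_all
next
  case (RPair A B)
  then obtain LA LB where "cert_list LA" "code_claim (code A) \<in> set LA"
    "cert_list LB" "code_claim (code B) \<in> set LB" by blast
  then show ?case by (intro cert_list_extend[of "LA @ LB"] cert_list_append code_rule_complete) simp_all
next
  case (RRec A B)
  then obtain LA LB where "cert_list LA" "code_claim (code A) \<in> set LA"
    "cert_list LB" "code_claim (code B) \<in> set LB" by blast
  then show ?case by (intro cert_list_extend[of "LA @ LB"] cert_list_append code_rule_complete) simp_all
next
  case (RMu A)
  then obtain LA where "cert_list LA" "code_claim (code A) \<in> set LA" by blast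
  then show ?case by (intro cert_list_extend[of LA] code_rule_complete(4)) simp_all
qed (intro cert_list_single, simp add: justified_def code_rule_def)+

definition cert :: "nat \<Rightarrow> bool" where
  "cert c \<longleftrightarrow> (\<forall>i<c. lvalid i c \<longrightarrow> justified (\<lambda>R. \<exists>j<i. R (lnth c j)) (lnth c i))"

lemma earlier_entries_enc:
  assumes "i \<le> length L"
  shows "(\<lambda>R. \<exists>j<i. R (lnth (list_encode L) j)) = some_in (set (take i L))"
proof (rule ext)
  fix R
  have "(\<exists>j<i. R (lnth (list_encode L) j)) \<longleftrightarrow> (\<exists>j\<in>{0..<i}. R (L ! j))"
    using assms by (auto simp: lnth_enc)
  also have "\<dots> \<longleftrightarrow> some_in (set (take i L)) R"
    unfolding some_in_def nth_image[OF assms, symmetric] by blast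
  finally show "(\<exists>j<i. R (lnth (list_encode L) j)) = some_in (set (take i L)) R" .
qed

lemma cert_list_encode: "cert (list_encode L) \<longleftrightarrow> cert_list L"
  using length_le_list_encode[of L]
  by (auto simp: cert_def cert_list_def lvalid_enc lnth_enc earlier_entries_enc)

lemma cert_sound: "cert c \<Longrightarrow> has_entry c P \<Longrightarrow> \<exists>u. P u \<and> claim_holds u"
  using cert_list_encode[of "list_decode c"] has_entry_enc[of "list_decode c"] cert_list_sound
  by auto

lemma computable_claim_sel [intro!]:
  "computable_fun a \<Longrightarrow> computable_fun (\<lambda>x. ctag (a x))"
  "computable_fun a \<Longrightarrow> computable_fun (\<lambda>x. corc (a x))"
  "computable_fun a \<Longrightarrow> computable_fun (\<lambda>x. cprog (a x))"
  "computable_fun a \<Longrightarrow> computable_fun (\<lambda>x. carg (a x))"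
  "computable_fun a \<Longrightarrow> computable_fun (\<lambda>x. cval (a x))"
  "computable_fun a \<Longrightarrow> computable_fun (\<lambda>x. ccode (a x))"
  unfolding ctag_def corc_def cprog_def carg_def cval_def ccode_def
  by (intro computable_fst computable_snd; assumption)+

lemmas computable_intros = computable_ball computable_imp computable_lvalid computable_or computable_and
  computable_eq computable_less computable_not computable_bex computable_claim_sel
  computable_lnth computable_mod9 computable_div9 computable_fst computable_snd computable_pair
  computable_sub computable_Suc computable_add computable_mult computable_const computable_id

text \<open>Checking a single step is decidable: the argument z packs the coded list and the index.\<close>
lemma computable_justified:
  "computable_fun (\<lambda>z. of_bool (justified (\<lambda>R. \<exists>j<snd (prod_decode z). R (lnth (fst (prod_decode z)) j))
     (lnth (fst (prod_decode z)) (snd (prod_decode z)))))"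
  unfolding justified_def base_rule_def comp_rule_def pair_rule_def rec0_rule_def recS_rule_def
    mu_rule_def code_rule_def is_ev_claim_def code_claim_def left_sub_def right_sub_def
  by (intro computable_intros)+

lemma computable_cert [intro!]: "computable_fun a \<Longrightarrow> computable_fun (\<lambda>x. of_bool (cert (a x)))"
proof -
  have "computable_fun (\<lambda>c. of_bool (cert c))"
    unfolding cert_def by (intro computable_ball computable_imp computable_lvalid computable_fst
        computable_snd computable_id computable_justified)
  then show "computable_fun a \<Longrightarrow> ?thesis" using computable_comp by blast
qed

section \<open>The halting problem through certificates\<close>

definition halts_claim :: "nat \<Rightarrow> nat \<Rightarrow> bool" where
  "halts_claim u i \<longleftrightarrow> ctag u = 0 \<and> corc u = 0 \<and> cprog u = i \<and> carg u = i"

text \<open>Numbers that are not program codes denote the program RZero, which halts.\<close>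
lemma non_code_halting: "i \<notin> range code \<Longrightarrow> i \<in> halting"
  using decode_non_code[of i] ev.evZ by (auto simp: halting_def phi_def)

lemma halts_claim_sound: "halts_claim u i \<Longrightarrow> claim_holds u \<Longrightarrow> i \<in> halting"
  using non_code_halting[of i] decode_eq_dec[of i]
  by (cases "i \<in> range code") (auto simp: halts_claim_def claim_holds_def halting_def phi_def list_orc_0)

lemma halting_certified:
  assumes "i \<in> range code" and "i \<in> halting"
  shows "\<exists>L. cert_list L \<and> (\<exists>u\<in>set L. halts_claim u i)"
proof -
  from assms obtain P y where P: "i = code P" and "ev (list_orc 0) P i y"
    by (auto simp: halting_def phi_def list_orc_0)
  from ev_claim_certified[OF this(2)] obtain L where "cert_list L" "ev_claim 0 (code P) i y \<in> set L"
    by blast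
  moreover have "halts_claim (ev_claim 0 (code P) i y) i" using P by (simp add: halts_claim_def)
  ultimately show ?thesis by blast
qed

text \<open>The Pi-1 / Sigma-1 description of a finite piece of the halting set: for a certificate w,
  the 0/1 list oh is the characteristic string of the halting set below Q iff halting_guess holds
  for every candidate certificate s.  A positive entry is certified by w to halt, unless i is not
  a program code at all; a negative entry is certified by w to be a program code, and no s
  certifies that it halts.\<close>
definition halting_guess :: "nat \<Rightarrow> nat \<Rightarrow> nat \<Rightarrow> nat \<Rightarrow> bool" where
  "halting_guess oh Q w s \<longleftrightarrow> (\<forall>i<Q.
     (lnth oh i \<noteq> 0 \<longrightarrow> has_entry w (\<lambda>u. halts_claim u i)
                           \<or> \<not> (cert s \<and> has_entry s (\<lambda>u. u = code_claim i)))
   \<and> (lnth oh i = 0 \<longrightarrow> has_entry w (\<lambda>u. u = code_claim i)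
                           \<and> \<not> (cert s \<and> has_entry s (\<lambda>u. halts_claim u i))))"

lemma halting_guess_correct:
  assumes w: "cert w" and guess: "\<forall>s. halting_guess oh Q w s" and "i < Q"
  shows "lnth oh i \<noteq> 0 \<longleftrightarrow> i \<in> halting"
proof
  assume "lnth oh i \<noteq> 0"
  then have guess_i: "has_entry w (\<lambda>u. halts_claim u i) \<or> \<not> (cert s \<and> has_entry s (\<lambda>u. u = code_claim i))"
    for s using guess \<open>i < Q\<close> unfolding halting_guess_def by blast
  show "i \<in> halting"
  proof (cases "i \<in> range code")
    case True
    then obtain L where "cert_list L" "code_claim i \<in> set L" using code_claim_certified by blast
    then have "cert (list_encode L) \<and> has_entry (list_encode L) (\<lambda>u. u = code_claim i)"
      by (auto simp: cert_list_encode has_entry_enc)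
    with guess_i have "has_entry w (\<lambda>u. halts_claim u i)" by blast
    then show ?thesis using cert_sound[OF w] halts_claim_sound by blast
  qed (rule non_code_halting)
next
  assume "i \<in> halting"
  show "lnth oh i \<noteq> 0"
  proof
    assume "lnth oh i = 0"
    then have guess_i: "has_entry w (\<lambda>u. u = code_claim i) \<and> \<not> (cert s \<and> has_entry s (\<lambda>u. halts_claim u i))"
      for s using guess \<open>i < Q\<close> unfolding halting_guess_def by blast
    then have "claim_holds (code_claim i)" using cert_sound[OF w] by blast
    then have "i \<in> range code" by (simp add: claim_holds_def)
    from halting_certified[OF this \<open>i \<in> halting\<close>] obtain L
      where "cert_list L" "\<exists>u\<in>set L. halts_claim u i" by blast
    then have "cert (list_encode L) \<and> has_entry (list_encode L) (\<lambda>u. halts_claim u i)"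
      by (simp add: cert_list_encode has_entry_enc)
    with guess_i show False by blast
  qed
qed

definition halting_witnessed :: "nat \<Rightarrow> nat set \<Rightarrow> bool" where
  "halting_witnessed i S \<longleftrightarrow> (i \<in> halting \<and> i \<in> range code \<longrightarrow> (\<exists>u\<in>S. halts_claim u i))
                            \<and> (i \<notin> halting \<longrightarrow> code_claim i \<in> S)"

lemma halting_witnesses_certified: "\<exists>Lh. cert_list Lh \<and> (\<forall>i<Q. halting_witnessed i (set Lh))"
proof (rule cert_list_merge)
  show "halting_witnessed m (set L')" if "halting_witnessed m (set L)" "set L \<subseteq> set L'" for m L L'
    using that unfolding halting_witnessed_def by blast
  show "\<forall>i<Q. \<exists>L. cert_list L \<and> halting_witnessed i (set L)"
  proof (intro allI impI)
    fix i
    consider "i \<in> halting" "i \<in> range code" | "i \<in> halting" "i \<notin> range code" | "i \<notin> halting" "i \<in> range code"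
      using non_code_halting by blast
    then show "\<exists>L. cert_list L \<and> halting_witnessed i (set L)"
    proof cases
      case 1 then show ?thesis using halting_certified unfolding halting_witnessed_def by blast
    next
      case 2 then show ?thesis by (intro exI[of _ "[]"]) (simp add: cert_list_def halting_witnessed_def)
    next
      case 3 then show ?thesis using code_claim_certified unfolding halting_witnessed_def by blast
    qed
  qed
qed

lemma true_halting_guess:
  "\<exists>Lh. cert_list Lh \<and>
     (\<forall>L s. set Lh \<subseteq> set L \<longrightarrow> halting_guess (str_code (restr halting Q)) Q (list_encode L) s)"
proof -
  obtain Lh where Lh: "cert_list Lh" "\<forall>i<Q. halting_witnessed i (set Lh)"
    using halting_witnesses_certified by blast
  have "halting_guess (str_code (restr halting Q)) Q (list_encode L) s" if "set Lh \<subseteq> set L" for L s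
    unfolding halting_guess_def
  proof (intro allI impI conjI)
    fix i assume "i < Q"
    then have oh: "lnth (str_code (restr halting Q)) i = of_bool (i \<in> halting)"
      by (simp add: lnth_str_code)
    have W: "halting_witnessed i (set L)" using Lh(2) \<open>i < Q\<close> that unfolding halting_witnessed_def by blast
    show "has_entry (list_encode L) (\<lambda>u. halts_claim u i) \<or> \<not> (cert s \<and> has_entry s (\<lambda>u. u = code_claim i))"
      if "lnth (str_code (restr halting Q)) i \<noteq> 0"
      using that oh W cert_sound[of s "\<lambda>u. u = code_claim i"]
      by (cases "i \<in> range code") (auto simp: halting_witnessed_def has_entry_enc claim_holds_def)
    show "has_entry (list_encode L) (\<lambda>u. u = code_claim i)" if "lnth (str_code (restr halting Q)) i = 0"
      using that oh W by (auto simp: halting_witnessed_def has_entry_enc)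
    show "\<not> (cert s \<and> has_entry s (\<lambda>u. halts_claim u i))" if "lnth (str_code (restr halting Q)) i = 0"
      using that oh cert_sound halts_claim_sound by fastforce
  qed
  with Lh(1) show ?thesis by blast
qed

section \<open>Diagonal programs\<close>

primrec add_const :: "nat \<Rightarrow> rf" where
  "add_const 0 = RPair RFst RSnd"
| "add_const (Suc c) = RComp RSucc (add_const c)"

lemma ev_add_const: "ev Q (add_const c) x (x + c)"
proof (induction c)
  case 0
  have "ev Q (RPair RFst RSnd) x (prod_encode (fst (prod_decode x), snd (prod_decode x)))"
    by (intro ev.intros)
  then show ?case by simp
next
  case (Suc c) then show ?case using ev.evC[OF Suc ev.evS] by simp
qed

text \<open>For a program Pf computing f, the program diag_prog Pf c on input x searches for an n at
  which its body returns 0; the body ignores n and returns 1 - b, where b is the oracle bit at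
  f x + c (the subtraction is the recursion RRec (RComp RSucc RZero) RZero).  So it halts iff
  that bit is 1.\<close>
definition diag_body :: "rf \<Rightarrow> nat \<Rightarrow> rf" where
  "diag_body Pf c = RComp (RRec (RComp RSucc RZero) RZero)
     (RPair RZero (RComp ROrc (RComp (add_const c) (RComp Pf RFst))))"

definition diag_prog :: "rf \<Rightarrow> nat \<Rightarrow> rf" where
  "diag_prog Pf c = RMu (diag_body Pf c)"

lemma ev_diag_body:
  assumes hf: "\<And>Q x. ev Q Pf x (f x)"
  shows "ev (set_orc X) (diag_body Pf c) w (if f (fst (prod_decode w)) + c \<in> X then 0 else 1)"
proof -
  let ?b = "f (fst (prod_decode w)) + c \<in> X"
  have query: "ev (set_orc X) (RComp ROrc (RComp (add_const c) (RComp Pf RFst))) w (of_bool ?b)"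
    by (rule ev.evC[OF ev.evC[OF ev.evC[OF ev.evF hf] ev_add_const]])
       (rule ev.evO, simp add: set_orc_def)
  have one: "ev (set_orc X) (RRec (RComp RSucc RZero) RZero) (prod_encode (0, 0)) 1"
    by (rule ev.evR0[of _ 0]) (auto intro: ev.evC[OF ev.evZ ev.evS, simplified])
  have "ev (set_orc X) (RRec (RComp RSucc RZero) RZero) (prod_encode (0, of_bool ?b)) (if ?b then 0 else 1)"
  proof (cases ?b)
    case True
    have "ev (set_orc X) (RRec (RComp RSucc RZero) RZero) (prod_encode (0, Suc 0)) 0"
      by (rule ev.evRS[of _ 0 0 _ _ _ 1]) (use one in \<open>auto intro: ev.evZ\<close>)
    then show ?thesis using True by simp
  next
    case False then show ?thesis using one by simp
  qed
  then show ?thesis unfolding diag_body_def by (rule ev.evC[OF ev.evP[OF ev.evZ query]])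
qed

lemma diag_prog_halts:
  assumes hf: "\<And>Q x. ev Q Pf x (f x)"
  shows "(\<exists>y. ev (set_orc X) (diag_prog Pf c) x y) \<longleftrightarrow> f x + c \<in> X"
proof
  assume "\<exists>y. ev (set_orc X) (diag_prog Pf c) x y"
  then obtain y where "ev (set_orc X) (diag_body Pf c) (prod_encode (x, y)) 0"
    unfolding diag_prog_def by (blast elim: evME)
  from ev_functional[OF this ev_diag_body[OF hf]] show "f x + c \<in> X" by (simp split: if_splits)
next
  assume "f x + c \<in> X"
  then have "ev (set_orc X) (diag_body Pf c) (prod_encode (x, 0)) 0"
    using ev_diag_body[OF hf, of X c "prod_encode (x, 0)"] by simp
  then have "ev (set_orc X) (diag_prog Pf c) x 0" unfolding diag_prog_def by (rule ev.evM) simp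
  then show "\<exists>y. ev (set_orc X) (diag_prog Pf c) x y" by blast
qed

lemma diag_prog_jump:
  assumes "\<And>Q x. ev Q Pf x (f x)"
  shows "code (diag_prog Pf c) \<in> jump X \<longleftrightarrow> f (code (diag_prog Pf c)) + c \<in> X"
  unfolding jump_def phi_def decode_code using diag_prog_halts[OF assms] by simp

lemma computable_code_diag_prog: "computable_fun (\<lambda>c. code (diag_prog Pf c))"
proof -
  define add_step where "add_step k = 5 + 9 * prod_encode (1, k)" for k
  have "code (add_const c) = (add_step ^^ c) (code (RPair RFst RSnd))" for c
    by (induction c) (simp_all add: add_step_def)
  then have "code (diag_prog Pf c) = 8 + 9 * (5 + 9 * prod_encode (code (RRec (RComp RSucc RZero) RZero),
      6 + 9 * prod_encode (0, 5 + 9 * prod_encode (4, 5 + 9 * prod_encode ((add_step ^^ c) (code (RPair RFst RSnd)),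
      5 + 9 * prod_encode (code Pf, 2))))))" for c
    by (simp add: diag_prog_def diag_body_def)
  moreover have "computable_fun add_step" unfolding add_step_def by (intro computable_intros)
  ultimately show ?thesis
    by (simp only:) (intro computable_add computable_mult computable_pair computable_const computable_iter
        computable_id)
qed

section \<open>A Sigma-2 set of strings\<close>

lemma Sigma2_of_computable:
  assumes "computable_fun (\<lambda>z. of_bool (M (fst (prod_decode (fst (prod_decode z))))
             (snd (prod_decode (fst (prod_decode z)))) (snd (prod_decode z))))"
  shows "Sigma 2 {m. \<exists>k. \<forall>s. M m k s}"
proof -
  define R0 where "R0 = {z. M (fst (prod_decode (fst (prod_decode z)))) (snd (prod_decode (fst (prod_decode z))))
                             (snd (prod_decode z))}"
  define R1 where "R1 = {w. \<exists>s. prod_encode (w, s) \<notin> R0}"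
  have "Sigma 0 R0" using assms by (simp add: R0_def decidable_iff)
  then have "Sigma 1 R1" using R1_def by auto
  moreover have "{m. \<exists>k. \<forall>s. M m k s} = {m. \<exists>k. prod_encode (m, k) \<notin> R1}"
    by (simp add: R0_def R1_def)
  ultimately show ?thesis by (auto simp: numeral_2_eq_2)
qed

definition oracle_prefix :: "nat \<Rightarrow> nat \<Rightarrow> nat \<Rightarrow> nat \<Rightarrow> bool" where
  "oracle_prefix m oh ov Q \<longleftrightarrow> (\<forall>i<Q. lvalid i ov) \<and> \<not> lvalid Q ov \<and>
     (\<forall>t<Q. (2 * t < Q \<longrightarrow> lnth ov (2 * t) = lnth m t)
           \<and> (2 * t + 1 < Q \<longrightarrow> lnth ov (2 * t + 1) = lnth oh t))"

lemma join_even [simp]: "2 * t \<in> join A B \<longleftrightarrow> t \<in> A"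
  unfolding join_def by auto presburger

lemma join_odd [simp]: "Suc (2 * t) \<in> join A B \<longleftrightarrow> t \<in> B"
  unfolding join_def by auto presburger

lemma oracle_prefix_join:
  assumes pre: "oracle_prefix m oh ov Q"
    and A: "\<And>t. 2 * t < Q \<Longrightarrow> lnth m t = of_bool (t \<in> A)"
    and B: "\<And>t. 2 * t + 1 < Q \<Longrightarrow> lnth oh t \<noteq> 0 \<longleftrightarrow> t \<in> B"
  shows "list_orc ov = str_orc (restr (join A B) Q)"
proof
  fix x
  show "list_orc ov x = str_orc (restr (join A B) Q) x"
  proof (cases "x < Q")
    case False
    then have "\<not> lvalid x ov" using pre lvalid_mono[of x ov Q] by (auto simp: oracle_prefix_def)
    with False show ?thesis by (simp add: list_orc_def str_orc_def)
  next
    case True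
    have "lnth ov x \<noteq> 0 \<longleftrightarrow> x \<in> join A B"
    proof (cases "even x")
      case True
      then obtain t where "x = 2 * t" by (rule evenE)
      with pre A \<open>x < Q\<close> show ?thesis by (simp add: oracle_prefix_def)
    next
      case False
      then obtain t where "x = 2 * t + 1" by (rule oddE)
      with pre B \<open>x < Q\<close> show ?thesis by (simp add: oracle_prefix_def)
    qed
    with True pre show ?thesis by (simp add: list_orc_def str_orc_def restr_def oracle_prefix_def)
  qed
qed

lemma oracle_prefix_restr:
  assumes "\<And>t. 2 * t < Q \<Longrightarrow> t < length \<tau> \<and> (\<tau> ! t \<longleftrightarrow> t \<in> A)"
  shows "oracle_prefix (str_code \<tau>) (str_code (restr B Q)) (str_code (restr (join A B) Q)) Q"
  unfolding oracle_prefix_def using assms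
  by (auto simp: lvalid_str_code lnth_str_code restr_def)

text \<open>With E the index of the functional, qf c its use on the
  diagonal point dc c, P = qf c + c, and m coding a string sigma, it says: sigma is defined at P;
  the functional, run with the oracle string ov (the first qf c bits of the join of sigma with the
  guess oh for the halting set), outputs v at dc c, as certified by w; sigma(P) disagrees with
  v; and the guess oh survives the candidate counter-certificate s.\<close>
definition diag_matrix ::
    "nat \<Rightarrow> (nat \<Rightarrow> nat) \<Rightarrow> (nat \<Rightarrow> nat) \<Rightarrow> nat \<Rightarrow> nat \<Rightarrow> nat \<Rightarrow> nat \<Rightarrow> nat \<Rightarrow> nat \<Rightarrow> nat \<Rightarrow> bool" where
  "diag_matrix E qf dc m c oh ov v w s \<longleftrightarrow>
     lvalid (qf c + c) m \<and> (lnth m (qf c + c) \<noteq> 0 \<and> v \<noteq> 1 \<or> lnth m (qf c + c) = 0 \<and> v = 1)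
   \<and> oracle_prefix m oh ov (qf c)
   \<and> cert w \<and> has_entry w (\<lambda>u. u = ev_claim ov E (dc c) v)
   \<and> halting_guess oh (qf c) w s"

definition wit_c :: "nat \<Rightarrow> nat" where "wit_c k = fst (prod_decode k)"
definition wit_oh :: "nat \<Rightarrow> nat" where "wit_oh k = fst (prod_decode (snd (prod_decode k)))"
definition wit_ov :: "nat \<Rightarrow> nat" where
  "wit_ov k = fst (prod_decode (snd (prod_decode (snd (prod_decode k)))))"
definition wit_v :: "nat \<Rightarrow> nat" where
  "wit_v k = fst (prod_decode (snd (prod_decode (snd (prod_decode (snd (prod_decode k)))))))"
definition wit_w :: "nat \<Rightarrow> nat" where
  "wit_w k = snd (prod_decode (snd (prod_decode (snd (prod_decode (snd (prod_decode k)))))))"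

definition diag_strings :: "nat \<Rightarrow> (nat \<Rightarrow> nat) \<Rightarrow> (nat \<Rightarrow> nat) \<Rightarrow> bool list set" where
  "diag_strings E qf dc = {\<sigma>. \<exists>k. \<forall>s.
     diag_matrix E qf dc (str_code \<sigma>) (wit_c k) (wit_oh k) (wit_ov k) (wit_v k) (wit_w k) s}"

lemma diag_strings_iff:
  "\<sigma> \<in> diag_strings E qf dc \<longleftrightarrow> (\<exists>c oh ov v w. \<forall>s. diag_matrix E qf dc (str_code \<sigma>) c oh ov v w s)"
proof
  assume "\<exists>c oh ov v w. \<forall>s. diag_matrix E qf dc (str_code \<sigma>) c oh ov v w s"
  then obtain c oh ov v w where "\<forall>s. diag_matrix E qf dc (str_code \<sigma>) c oh ov v w s" by blast
  then show "\<sigma> \<in> diag_strings E qf dc"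
    unfolding diag_strings_def
    by (intro CollectI exI[of _ "prod_encode (c, prod_encode (oh, prod_encode (ov, prod_encode (v, w))))"])
       (simp add: wit_c_def wit_oh_def wit_ov_def wit_v_def wit_w_def)
qed (unfold diag_strings_def, blast)

lemma diag_strings_Sigma2:
  assumes qf: "computable_fun qf" and dc: "computable_fun dc"
  shows "Sigma_strings 2 (diag_strings E qf dc)"
proof -
  have qf': "computable_fun (\<lambda>x. qf (a x))" and dc': "computable_fun (\<lambda>x. dc (a x))"
    if "computable_fun a" for a
    using computable_comp qf dc that by blast+
  have "computable_fun (\<lambda>z. of_bool (diag_matrix E qf dc (fst (prod_decode (fst (prod_decode z))))
      (wit_c (snd (prod_decode (fst (prod_decode z))))) (wit_oh (snd (prod_decode (fst (prod_decode z)))))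
      (wit_ov (snd (prod_decode (fst (prod_decode z))))) (wit_v (snd (prod_decode (fst (prod_decode z)))))
      (wit_w (snd (prod_decode (fst (prod_decode z))))) (snd (prod_decode z))))"
    unfolding diag_matrix_def oracle_prefix_def halting_guess_def halts_claim_def has_entry_def
      ev_claim_def code_claim_def wit_c_def wit_oh_def wit_ov_def wit_v_def wit_w_def
    by (intro computable_intros computable_cert qf' dc')+
  then have "Sigma 2 {m. \<exists>k. \<forall>s. diag_matrix E qf dc m (wit_c k) (wit_oh k) (wit_ov k) (wit_v k) (wit_w k) s}"
    by (rule Sigma2_of_computable)
  then show ?thesis unfolding Sigma_strings_def diag_strings_def by blast
qed

section \<open>The two halves of the genericity argument\<close>

text \<open>No initial segment of X lies in the Sigma-2 set built from a truth-table reduction of X'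
  to X join 0': the certified computation would be the true one, contradicting the
  diagonalisation at P.\<close>
lemma initial_segment_not_diag:
  assumes hPf: "\<And>Q x. ev Q Pf x (f x)"
    and red: "computes e (join X halting) (jump X)"
    and mat: "\<forall>s. diag_matrix (code (decode e)) (\<lambda>c. f (code (diag_prog Pf c))) (\<lambda>c. code (diag_prog Pf c))
                (str_code (restr X l)) c oh ov v w s"
  shows False
proof -
  define d where "d = code (diag_prog Pf c)"
  define Q where "Q = f d"
  define B where "B = join X halting"
  note M = mat[unfolded diag_matrix_def, folded d_def, folded Q_def]
  have "Q + c < l" using M lvalid_str_code[of "Q + c" "restr X l"] by simp
  then have bits: "lnth (str_code (restr X l)) t = of_bool (t \<in> X)" if "t \<le> Q + c" for t
    using that by (simp add: lnth_str_code)
  have disagree: "Q + c \<in> X \<longleftrightarrow> v \<noteq> 1" using M bits by auto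
  have "list_orc ov = str_orc (restr B Q)" unfolding B_def
  proof (rule oracle_prefix_join)
    show "oracle_prefix (str_code (restr X l)) oh ov Q" using M by blast
    show "lnth (str_code (restr X l)) t = of_bool (t \<in> X)" if "2 * t < Q" for t
      using that bits by simp
    show "lnth oh t \<noteq> 0 \<longleftrightarrow> t \<in> halting" if "2 * t + 1 < Q" for t
      using that M halting_guess_correct[of w oh Q t] by simp
  qed
  moreover obtain u where "u = ev_claim ov (code (decode e)) d v" "claim_holds u"
    using M cert_sound[of w] by blast
  ultimately have "ev (str_orc (restr B Q)) (decode e) d v"
    by (simp add: claim_holds_def dec_code)
  then have "ev (set_orc B) (decode e) d v"
    by (rule ev_oracle_mono) (auto simp: str_orc_def set_orc_def split: if_splits)
  moreover have "ev (set_orc B) (decode e) d (if d \<in> jump X then 1 else 0)"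
    using red unfolding computes_def phi_def B_def by blast
  ultimately have "v = (if d \<in> jump X then 1 else 0)" by (rule ev_functional)
  moreover have "d \<in> jump X \<longleftrightarrow> Q + c \<in> X" using diag_prog_jump[OF hPf] by (simp add: d_def Q_def)
  ultimately show False using disagree by (simp split: if_splits)
qed

text \<open>Every initial segment of X extends into the Sigma-2 set: diagonalise at c = l, taking the
  true halting set as guess and appending at position P the bit opposite to the output of the
  functional, which converges on strings of the right length.\<close>
lemma diag_extension:
  assumes hPf: "\<And>Q x. ev Q Pf x (f x)"
    and tt: "\<forall>n \<sigma>. length \<sigma> = f n \<longrightarrow> (\<exists>y. phi e (str_orc \<sigma>) n y)"
  shows "\<exists>\<tau>. prefix (restr X l) \<tau> \<and> (\<exists>c oh ov v w. \<forall>s.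
     diag_matrix (code (decode e)) (\<lambda>c. f (code (diag_prog Pf c))) (\<lambda>c. code (diag_prog Pf c)) (str_code \<tau>)
       c oh ov v w s)"
proof -
  define d where "d = code (diag_prog Pf l)"
  define Q where "Q = f d"
  define B where "B = join X halting"
  define oh where "oh = str_code (restr halting Q)"
  define ov where "ov = str_code (restr B Q)"
  have "length (restr B Q) = f d" by (simp add: Q_def)
  from tt[rule_format, OF this] obtain v where "phi e (str_orc (restr B Q)) d v" by blast
  then have "ev (list_orc ov) (decode e) d v" by (simp add: ov_def list_orc_str_code phi_def)
  from ev_claim_certified[OF this] obtain L0
    where L0: "cert_list L0" "ev_claim ov (code (decode e)) d v \<in> set L0" by blast
  obtain Lh where Lh: "cert_list Lh" "\<And>L s. set Lh \<subseteq> set L \<Longrightarrow> halting_guess oh Q (list_encode L) s"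
    using true_halting_guess[of Q] unfolding oh_def by blast
  define w where "w = list_encode (L0 @ Lh)"
  define \<tau> where "\<tau> = restr X (Q + l) @ [v \<noteq> 1]"
  have "prefix (restr X l) (restr X (Q + l))" by (rule prefix_restr) simp
  then have "prefix (restr X l) \<tau>" unfolding \<tau>_def by (rule prefix_prefix)
  moreover have "diag_matrix (code (decode e)) (\<lambda>c. f (code (diag_prog Pf c))) (\<lambda>c. code (diag_prog Pf c))
      (str_code \<tau>) l oh ov v w s" for s
    unfolding diag_matrix_def d_def[symmetric] Q_def[symmetric]
  proof (intro conjI)
    show "lvalid (Q + l) (str_code \<tau>)" by (simp add: \<tau>_def lvalid_str_code)
    show "lnth (str_code \<tau>) (Q + l) \<noteq> 0 \<and> v \<noteq> 1 \<or> lnth (str_code \<tau>) (Q + l) = 0 \<and> v = 1"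
      by (simp add: \<tau>_def lnth_str_code nth_append)
    show "oracle_prefix (str_code \<tau>) oh ov Q"
      unfolding oh_def ov_def B_def by (rule oracle_prefix_restr) (simp add: \<tau>_def nth_append)
    show "cert w" using L0 Lh by (simp add: w_def cert_list_encode cert_list_append)
    show "has_entry w (\<lambda>u. u = ev_claim ov (code (decode e)) d v)"
      using L0 by (auto simp: w_def has_entry_enc)
    show "halting_guess oh Q w s" using Lh by (simp add: w_def)
  qed
  ultimately show ?thesis by blast
qed

theorem mainTheorem1:
  assumes "generic 2 X"
  shows "\<not> tt_le (jump X) (join X halting)"
proof
  assume "tt_le (jump X) (join X halting)"
  then obtain e f where red: "computes e (join X halting) (jump X)" and "computable_fun f"
    and tt: "\<forall>n \<sigma>. length \<sigma> = f n \<longrightarrow> (\<exists>y. phi e (str_orc \<sigma>) n y)"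
    unfolding tt_le_def tt_functional_def by blast
  then obtain Pf where hPf: "\<And>Q x. ev Q Pf x (f x)" unfolding computable_fun_iff by blast
  let ?S = "diag_strings (code (decode e)) (\<lambda>c. f (code (diag_prog Pf c))) (\<lambda>c. code (diag_prog Pf c))"
  have "Sigma_strings 2 ?S"
    by (intro diag_strings_Sigma2 computable_comp[OF \<open>computable_fun f\<close>] computable_code_diag_prog)
  with assms consider l where "restr X l \<in> ?S" | l where "\<forall>\<tau>. prefix (restr X l) \<tau> \<longrightarrow> \<tau> \<notin> ?S"
    unfolding generic_def by blast
  then show False
  proof cases
    case 1
    then show False using initial_segment_not_diag[OF hPf red] by (auto simp: diag_strings_iff)
  next
    case 2
    obtain \<tau> where "prefix (restr X l) \<tau>" "\<tau> \<in> ?S"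
      using diag_extension[OF hPf tt, of X l] unfolding diag_strings_iff by blast
    with 2 show False by blast
  qed
qed

end
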